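(* Without the moment bound constraint $\int\|\mathbf{x}\|_2^d\,\mathrm{d}\mu\le M$, an optimization problem of option-pricing type over probability measures need not attain its optimal value. Specifically, for real numbers $0 \le k_1 < k_2$ and $a > 0$, the problem \[ p^\ast = \inf\Big\{\int_0^\infty \max(0,x-k_1)\,\mathrm{d}\mu(x) \;:\; \mu \text{ a Borel probability measure on } [0,\infty),\ \int_0^\infty \max(0,x-k_2)\,\mathrm{d}\mu(x) = a\Big\} \] is feasible, but there is no feasible probability measure $\mu$ attaining the infimum $p^\ast$. *)

theory Defs
  imports "HOL-Probability.Probability"
begin

definition borel_prob_nonneg :: "real measure \<Rightarrow> bool" where
  "borel_prob_nonneg \<mu> \<longleftrightarrow> prob_space \<mu> \<and> sets \<mu> = sets (restrict_space borel {0..})"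

definition opt_feasible :: "real \<Rightarrow> real \<Rightarrow> real measure \<Rightarrow> bool" where
  "opt_feasible k2 a \<mu> \<longleftrightarrow> borel_prob_nonneg \<mu> \<and>
     (\<integral>\<^sup>+ x. ennreal (max 0 (x - k2)) \<partial>\<mu>) = ennreal a"

definition opt_cost :: "real \<Rightarrow> real measure \<Rightarrow> ennreal" where
  "opt_cost k1 \<mu> = (\<integral>\<^sup>+ x. ennreal (max 0 (x - k1)) \<partial>\<mu>)"

end

theory Submission
  imports Defs
begin

text \<open>Every feasible measure costs strictly more than \<open>a\<close>: the cost splits as
  \<open>a\<close> plus the integral of the nonnegative gap \<open>max 0 (x - k1) - max 0 (x - k2)\<close>, and that
  integral vanishes only if \<open>\<mu>\<close> is concentrated on \<open>[0, k1]\<close>, where the constraint integral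
  is \<open>0 \<noteq> a\<close>. On the other hand, moving mass \<open>p\<close> to \<open>k2 + a / p\<close> and the rest to \<open>0\<close> is
  feasible with cost \<open>a + p (k2 - k1)\<close>, which tends to \<open>a\<close> as \<open>p \<rightarrow> 0\<close>. So the infimum is
  \<open>a\<close> and it is not attained.\<close>

definition two_point_measure :: "real \<Rightarrow> real \<Rightarrow> real \<Rightarrow> real measure" where
  "two_point_measure p x y =
     distr (measure_pmf (bernoulli_pmf p)) (restrict_space borel {0..}) (\<lambda>b. if b then x else y)"

lemma measurable_two_point:
  assumes "0 \<le> x" "0 \<le> y"
  shows "(\<lambda>b. if b then x else y) \<in> measurable (measure_pmf (bernoulli_pmf p)) (restrict_space borel {0..})"
  using assms by (auto simp: space_restrict_space)

lemma borel_prob_nonneg_two_point_measure: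
  assumes "0 \<le> x" "0 \<le> y"
  shows "borel_prob_nonneg (two_point_measure p x y)"
  unfolding borel_prob_nonneg_def two_point_measure_def
  using measurable_two_point[OF assms]
  by (auto intro: prob_space.prob_space_distr prob_space_measure_pmf)

lemma nn_integral_two_point_measure:
  assumes "0 \<le> p" "p \<le> 1" "0 \<le> x" "0 \<le> y" "f \<in> borel_measurable borel"
  shows "(\<integral>\<^sup>+ t. f t \<partial>two_point_measure p x y) = f x * ennreal p + f y * ennreal (1 - p)"
proof -
  have "f \<in> borel_measurable (restrict_space borel {0..})"
    using assms(5) by (rule measurable_restrict_space1)
  then show ?thesis
    unfolding two_point_measure_def
    using assms by (simp add: nn_integral_distr measurable_two_point)
qed

lemma borel_prob_nonneg_measurable:
  assumes "borel_prob_nonneg \<mu>" "f \<in> measurable borel M"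
  shows "f \<in> measurable \<mu> M"
proof -
  have "f \<in> measurable (restrict_space borel {0..}) M"
    using assms(2) by (rule measurable_restrict_space1)
  then show ?thesis
    using assms(1) unfolding borel_prob_nonneg_def by (simp cong: measurable_cong_sets)
qed

lemma opt_feasible_two_point_measure:
  assumes "0 < p" "p \<le> 1" "0 \<le> k2" "0 \<le> a"
  shows "opt_feasible k2 a (two_point_measure p (k2 + a / p) 0)"
proof -
  have "(\<integral>\<^sup>+ x. ennreal (max 0 (x - k2)) \<partial>two_point_measure p (k2 + a / p) 0) =
        ennreal (a / p) * ennreal p"
    using assms by (subst nn_integral_two_point_measure) auto
  also have "\<dots> = ennreal a"
    using assms by (simp flip: ennreal_mult)
  finally show ?thesis
    unfolding opt_feasible_def using assms by (simp add: borel_prob_nonneg_two_point_measure)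
qed

lemma opt_cost_two_point_measure:
  assumes "0 < p" "p \<le> 1" "0 \<le> k1" "k1 \<le> k2" "0 \<le> a"
  shows "opt_cost k1 (two_point_measure p (k2 + a / p) 0) = ennreal (a + p * (k2 - k1))"
proof -
  have "0 \<le> k2 + a / p - k1"
    using assms divide_nonneg_pos[of a p] by linarith
  have "opt_cost k1 (two_point_measure p (k2 + a / p) 0) = ennreal (k2 + a / p - k1) * ennreal p"
    unfolding opt_cost_def using assms by (subst nn_integral_two_point_measure) auto
  also have "\<dots> = ennreal ((k2 + a / p - k1) * p)"
    using \<open>0 \<le> k2 + a / p - k1\<close> \<open>0 < p\<close> by (simp add: ennreal_mult)
  also have "(k2 + a / p - k1) * p = a + p * (k2 - k1)"
    using assms by (simp add: field_simps)
  finally show ?thesis .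
qed

lemma INF_opt_cost_le:
  assumes "0 \<le> k1" "k1 \<le> k2" "0 \<le> a"
  shows "(INF \<nu> \<in> {\<nu>. opt_feasible k2 a \<nu>}. opt_cost k1 \<nu>) \<le> ennreal a"
proof (rule ennreal_le_epsilon)
  fix e :: real
  assume "0 < e"
  define p where "p = e / (e + (k2 - k1))"
  have p: "0 < p" "p \<le> 1"
    using \<open>0 < e\<close> assms unfolding p_def by auto
  have "p * (k2 - k1) \<le> e"
    using \<open>0 < e\<close> assms unfolding p_def by (simp add: field_simps)
  have "(INF \<nu> \<in> {\<nu>. opt_feasible k2 a \<nu>}. opt_cost k1 \<nu>) \<le> opt_cost k1 (two_point_measure p (k2 + a / p) 0)"
    using p assms by (intro INF_lower) (simp add: opt_feasible_two_point_measure)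
  also have "\<dots> = ennreal (a + p * (k2 - k1))"
    using p assms by (rule opt_cost_two_point_measure)
  also have "\<dots> \<le> ennreal a + ennreal e"
    using \<open>p * (k2 - k1) \<le> e\<close> \<open>0 < e\<close> assms by (simp flip: ennreal_plus)
  finally show "(INF \<nu> \<in> {\<nu>. opt_feasible k2 a \<nu>}. opt_cost k1 \<nu>) \<le> ennreal a + ennreal e" .
qed

lemma opt_cost_gt:
  assumes "k1 < k2" "0 < a" "opt_feasible k2 a \<mu>"
  shows "ennreal a < opt_cost k1 \<mu>"
proof -
  define gap where "gap x = max 0 (x - k1) - max 0 (x - k2)" for x :: real
  have gap_nonneg: "0 \<le> gap x" for x
    using assms(1) unfolding gap_def by auto
  have \<mu>: "borel_prob_nonneg \<mu>" and constraint: "(\<integral>\<^sup>+ x. ennreal (max 0 (x - k2)) \<partial>\<mu>) = ennreal a"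
    using assms(3) unfolding opt_feasible_def by auto
  have meas_excess: "(\<lambda>x. ennreal (max 0 (x - k2))) \<in> borel_measurable \<mu>"
    using \<mu> by (rule borel_prob_nonneg_measurable) measurable
  have meas_gap: "(\<lambda>x. ennreal (gap x)) \<in> borel_measurable \<mu>"
    using \<mu> by (rule borel_prob_nonneg_measurable) (measurable, simp add: gap_def)
  have "ennreal (max 0 (x - k1)) = ennreal (max 0 (x - k2)) + ennreal (gap x)" for x
    using gap_nonneg[of x] by (subst ennreal_plus[symmetric]) (auto simp: gap_def)
  then have "opt_cost k1 \<mu> = (\<integral>\<^sup>+ x. ennreal (max 0 (x - k2)) + ennreal (gap x) \<partial>\<mu>)"
    unfolding opt_cost_def by simp
  also have "\<dots> = ennreal a + (\<integral>\<^sup>+ x. ennreal (gap x) \<partial>\<mu>)"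
    using nn_integral_add[OF meas_excess meas_gap] constraint by simp
  finally have cost: "opt_cost k1 \<mu> = ennreal a + (\<integral>\<^sup>+ x. ennreal (gap x) \<partial>\<mu>)" .
  have "(\<integral>\<^sup>+ x. ennreal (gap x) \<partial>\<mu>) \<noteq> 0"
  proof
    assume "(\<integral>\<^sup>+ x. ennreal (gap x) \<partial>\<mu>) = 0"
    then have "AE x in \<mu>. ennreal (gap x) = 0"
      using meas_gap by (simp add: nn_integral_0_iff_AE)
    then have "AE x in \<mu>. ennreal (max 0 (x - k2)) = 0"
      by (rule AE_mp) (use assms(1) in \<open>auto simp: gap_def max_def\<close>)
    then have "(\<integral>\<^sup>+ x. ennreal (max 0 (x - k2)) \<partial>\<mu>) = 0"
      using meas_excess by (simp add: nn_integral_0_iff_AE)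
    with constraint \<open>0 < a\<close> show False
      by simp
  qed
  then show ?thesis
    unfolding cost by (simp add: gr_zeroI)
qed

theorem proposition1:
  fixes k1 k2 a :: real
  assumes "0 \<le> k1" and "k1 < k2" and "a > 0"
  shows "(\<exists>\<mu>. opt_feasible k2 a \<mu>) \<and>
         \<not> (\<exists>\<mu>. opt_feasible k2 a \<mu> \<and>
               opt_cost k1 \<mu> = (INF \<nu> \<in> {\<nu>. opt_feasible k2 a \<nu>}. opt_cost k1 \<nu>))"
proof
  show "\<exists>\<mu>. opt_feasible k2 a \<mu>"
    using assms opt_feasible_two_point_measure[of 1 k2 a] by auto
  have "(INF \<nu> \<in> {\<nu>. opt_feasible k2 a \<nu>}. opt_cost k1 \<nu>) \<le> ennreal a"
    using assms by (intro INF_opt_cost_le) auto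
  then show "\<not> (\<exists>\<mu>. opt_feasible k2 a \<mu> \<and>
               opt_cost k1 \<mu> = (INF \<nu> \<in> {\<nu>. opt_feasible k2 a \<nu>}. opt_cost k1 \<nu>))"
    using opt_cost_gt[OF \<open>k1 < k2\<close> \<open>a > 0\<close>] by (metis leD)
qed

end
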